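(* For all integers $k,n\ge 1$, \begin{align*} \zeta^*(k+1,\underbrace{1,\dots,1}_{n})&=\sum_{t=1}^{n+1}\ \sum_{\substack{a_1+\dots+a_k=n+1-t\\ a_i\ge 0}}\zeta(a_k+t+1,\,a_1+1,\,a_2+1,\dots,a_{k-1}+1)\\ &=\sum_{\substack{a_1+\dots+a_k=n\\ a_i\ge 0}}(a_k+1)\,\zeta(a_k+2,\,a_1+1,\,a_2+1,\dots,a_{k-1}+1). \end{align*}
   Context: For positive integers $k_1,\dots,k_n$ with $k_1\ge 2$, $\zeta(k_1,\dots,k_n)=\sum_{m_1>\dots>m_n\ge 1}\prod_i m_i^{-k_i}$ and $\zeta^*(k_1,\dots,k_n)=\sum_{m_1\ge\dots\ge m_n\ge 1}\prod_i m_i^{-k_i}$. $\underbrace{1,\dots,1}_{n}$ denotes $n$ entries equal to $1$. For $k=1$ the arguments after the first entry are absent. *)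

theory Defs
  imports "HOL-Analysis.Analysis"
begin

definition mzv :: "nat list \<Rightarrow> real" where
  "mzv ks = (\<Sum>\<^sub>\<infinity> ms \<in> {ms :: nat list. length ms = length ks \<and> sorted_wrt (>) ms \<and> (\<forall>m\<in>set ms. m \<ge> 1)}.
       (\<Prod>i<length ks. 1 / real (ms ! i) ^ (ks ! i)))"

definition mzv_star :: "nat list \<Rightarrow> real" where
  "mzv_star ks = (\<Sum>\<^sub>\<infinity> ms \<in> {ms :: nat list. length ms = length ks \<and> sorted_wrt (\<ge>) ms \<and> (\<forall>m\<in>set ms. m \<ge> 1)}.
       (\<Prod>i<length ks. 1 / real (ms ! i) ^ (ks ! i)))"

definition wcomps :: "nat \<Rightarrow> nat \<Rightarrow> nat list set" where
  "wcomps k N = {a. length a = k \<and> sum_list a = N}"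

end

theory Submission
  imports Defs "HOL-Computational_Algebra.Formal_Power_Series"
begin

text \<open>Write \<open>\<beta> m b\<close> for the power series \<open>\<Prod>j=1..m. j / (b + j - X)\<close> in \<open>X\<close>; its coefficients
  are nonnegative. Coefficientwise, two series telescope:
  \<open>\<Sum>m\<ge>1. \<beta> m b / m = 1 / (b - X)\<close> for \<open>b \<ge> 1\<close>, and \<open>\<Sum>b>n. m \<beta> m b / (b - X) = \<beta> m n\<close>
  for \<open>m \<ge> 1\<close>. In both, the remainder is nonnegative, decreasing and summable against a
  harmonic weight, hence tends to 0.

  Since \<open>\<beta> m 0 = \<Prod>j=1..m. 1 / (1 - X/j)\<close>, the coefficient of \<open>X^n\<close> in \<open>\<beta> m 0\<close> is the
  truncated sum \<open>\<zeta>*_{\<le>m}(1,...,1)\<close>, so \<open>\<zeta>*(k+1,1,...,1) = \<Sum>m\<ge>1. [X^n] \<beta> m 0 / m^(k+1)\<close>.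
  Applying the second series \<open>k\<close> times writes \<open>\<beta> m 0 / m^k\<close> as the sum of
  \<open>\<beta> m b / ((b - X)(n_1 - X)...(n_(k-1) - X))\<close> over \<open>b > n_1 > ... > n_(k-1) \<ge> 1\<close>.
  Exchanging the nonnegative sums over \<open>m\<close> and \<open>b\<close> and then applying the first series gives
  \<open>\<zeta>*(k+1,1,...,1) = \<Sum> [X^n] 1 / ((b - X)^2 (n_1 - X)...(n_(k-1) - X))\<close> over the same
  range. Expanding the geometric series yields the second right-hand side; the first is a
  regrouping of it.\<close>

section \<open>Series of nonnegative terms\<close>

lemma has_sum_sum:
  fixes f :: "'i \<Rightarrow> 'a \<Rightarrow> 'b::topological_comm_monoid_add"
  assumes "finite I" and "\<And>i. i \<in> I \<Longrightarrow> (f i has_sum S i) A"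
  shows "((\<lambda>x. \<Sum>i\<in>I. f i x) has_sum (\<Sum>i\<in>I. S i)) A"
  using assms by (induction I rule: finite_induct) (auto intro: has_sum_add)

lemma summable_on_summand_nonneg:
  fixes f :: "'i \<Rightarrow> 'a \<Rightarrow> real"
  assumes "finite I" and "i \<in> I" and "\<And>j x. j \<in> I \<Longrightarrow> x \<in> A \<Longrightarrow> f j x \<ge> 0"
    and "(\<lambda>x. \<Sum>j\<in>I. f j x) summable_on A"
  shows "f i summable_on A"
  by (rule summable_on_comparison_test[OF assms(4)]) (use assms in \<open>auto intro: member_le_sum\<close>)

lemma has_sum_atLeast_if_sums:
  fixes f :: "nat \<Rightarrow> real"
  assumes "(\<lambda>j. f (j + n)) sums s" and "\<And>j. j \<ge> n \<Longrightarrow> f j \<ge> 0"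
  shows "(f has_sum s) {n..}"
proof -
  have "((\<lambda>j. f (j + n)) has_sum s) UNIV"
    using assms by (intro sums_nonneg_imp_has_sum) auto
  also have "?this \<longleftrightarrow> (f has_sum s) {n..}"
    by (rule has_sum_reindex_bij_witness[of _ "\<lambda>j. j - n" "\<lambda>j. j + n"]) auto
  finally show ?thesis .
qed

lemma has_sum_Sigma_nonneg:
  fixes f :: "'a \<Rightarrow> 'b \<Rightarrow> real"
  assumes "\<And>x y. x \<in> A \<Longrightarrow> y \<in> B x \<Longrightarrow> f x y \<ge> 0"
    and "\<And>x. x \<in> A \<Longrightarrow> (f x has_sum g x) (B x)"
    and "(g has_sum S) A"
  shows "((\<lambda>(x, y). f x y) has_sum S) (Sigma A B)"
proof -
  have "(\<lambda>(x, y). f x y) summable_on Sigma A B"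
    using assms by (intro summable_on_SigmaI[where g = g]) (auto dest: has_sum_imp_summable)
  then show ?thesis
    using assms(2,3) by (intro has_sum_SigmaI) auto
qed

lemma has_sum_swap_nonneg:
  fixes f :: "'a \<Rightarrow> 'b \<Rightarrow> real"
  assumes "\<And>x y. x \<in> A \<Longrightarrow> y \<in> B x \<Longrightarrow> f x y \<ge> 0"
    and "\<And>x. x \<in> A \<Longrightarrow> (f x has_sum g x) (B x)"
    and "(g has_sum S) A"
    and "\<And>x y. x \<in> A \<and> y \<in> B x \<longleftrightarrow> y \<in> C \<and> x \<in> D y"
    and "\<And>y. y \<in> C \<Longrightarrow> ((\<lambda>x. f x y) has_sum h y) (D y)"
  shows "(h has_sum S) C"
proof -
  have "((\<lambda>(x, y). f x y) has_sum S) (Sigma A B)"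
    using assms(1-3) by (rule has_sum_Sigma_nonneg)
  also have "Sigma A B = prod.swap ` Sigma C D"
    using assms(4) by force
  finally have "((\<lambda>(y, x). f x y) has_sum S) (Sigma C D)"
    by (subst (asm) has_sum_reindex) (auto simp: o_def case_prod_unfold)
  then show ?thesis
    by (rule has_sum_SigmaD) (use assms(5) in auto)
qed

lemma decseq_telescope_summable:
  fixes r :: "nat \<Rightarrow> real"
  assumes "decseq r" and "\<And>N. r N \<ge> 0"
  shows "summable (\<lambda>N. r N - r (Suc N))"
proof -
  obtain L where "r \<longlonglongrightarrow> L"
    using decseq_convergent[OF assms(1), of 0] assms(2) by metis
  then show ?thesis by (rule telescope_summable')
qed

lemma decseq_tendsto_0_if_summable_div:
  fixes r :: "nat \<Rightarrow> real"
  assumes "decseq r" and "\<And>N. r N \<ge> 0" and "summable (\<lambda>N. r N / real (N + c))"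
  shows "r \<longlonglongrightarrow> 0"
proof -
  obtain L where L: "r \<longlonglongrightarrow> L" "\<And>N. L \<le> r N"
    using decseq_convergent[OF assms(1), of 0] assms(2) by metis
  have "L = 0"
  proof (rule ccontr)
    assume "L \<noteq> 0"
    moreover have "L \<ge> 0"
      using LIMSEQ_le_const[OF L(1)] assms(2) by blast
    ultimately have "L > 0" by simp
    have "norm (L * inverse (real (N + c))) \<le> r N / real (N + c)" for N
      using L(2)[of N] \<open>L > 0\<close> by (simp add: divide_inverse mult_right_mono)
    then have "summable (\<lambda>N. L * inverse (real (N + c)))"
      by (rule summable_comparison_test'[OF assms(3)])
    then have "summable (\<lambda>N. inverse (real (N + c)))"
      using \<open>L > 0\<close> by simp
    then have "summable (\<lambda>N. inverse (real N))"
      by (subst summable_iff_shift[symmetric, of _ c]) simp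
    then show False
      using not_summable_harmonic by blast
  qed
  with L(1) show ?thesis by simp
qed

section \<open>Power series with nonnegative coefficients\<close>

definition geom_fps :: "real \<Rightarrow> real fps" where
  "geom_fps c = Abs_fps (\<lambda>r. 1 / c ^ Suc r)"

lemma geom_fps_nth [simp]: "fps_nth (geom_fps c) r = 1 / c ^ Suc r"
  by (simp add: geom_fps_def)

lemma geom_fps_inverse:
  assumes "c \<noteq> 0"
  shows "(fps_const c - fps_X) * geom_fps c = 1"
proof (rule fps_ext)
  show "fps_nth ((fps_const c - fps_X) * geom_fps c) n = fps_nth 1 n" for n
    using assms
    by (cases n) (simp_all add: algebra_simps fps_mult_left_const_nth flip: fps_const_mult_left)
qed

lemma geom_fps_cancel:
  assumes "c \<noteq> 0"
  shows "(fps_const c - fps_X) * (F * geom_fps c) = F"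
  using geom_fps_inverse[OF assms] by (metis mult.left_commute mult.right_neutral)

lemma fps_nth_geom_fps_square: "fps_nth (geom_fps c * geom_fps c) j = real (Suc j) / c ^ (j + 2)"
proof -
  have "fps_nth (geom_fps c * geom_fps c) j = (\<Sum>i=0..j. 1 / c ^ (j + 2))"
    unfolding fps_mult_nth
  proof (rule sum.cong)
    fix i assume "i \<in> {0..j}"
    then have "c ^ Suc i * c ^ Suc (j - i) = c ^ (j + 2)"
      by (simp flip: power_add)
    then show "fps_nth (geom_fps c) i * fps_nth (geom_fps c) (j - i) = 1 / c ^ (j + 2)"
      by simp
  qed simp
  then show ?thesis by simp
qed

lemma fps_nth_const_minus_X_mult:
  "fps_nth ((fps_const c - fps_X) * (F :: real fps)) q
     = c * fps_nth F q - (if q = 0 then 0 else fps_nth F (q - 1))"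
proof -
  have "(fps_const c - fps_X) * F = fps_const c * F - fps_X * F"
    by (rule left_diff_distrib)
  then show ?thesis
    by (simp only: fps_sub_nth fps_mult_left_const_nth fps_X_mult_nth)
qed

definition nonneg_fps :: "real fps \<Rightarrow> bool" where
  "nonneg_fps F \<longleftrightarrow> (\<forall>i. fps_nth F i \<ge> 0)"

lemma nonneg_fps_nth: "nonneg_fps F \<Longrightarrow> fps_nth F i \<ge> 0"
  by (simp add: nonneg_fps_def)

lemma nonneg_fps_1 [simp]: "nonneg_fps 1"
  by (simp add: nonneg_fps_def)

lemma nonneg_fps_const [simp]: "c \<ge> 0 \<Longrightarrow> nonneg_fps (fps_const c)"
  by (simp add: nonneg_fps_def)

lemma nonneg_fps_geom_fps [simp]: "c \<ge> 0 \<Longrightarrow> nonneg_fps (geom_fps c)"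
  by (simp add: nonneg_fps_def)

lemma nonneg_fps_mult [simp]: "nonneg_fps F \<Longrightarrow> nonneg_fps G \<Longrightarrow> nonneg_fps (F * G)"
  unfolding nonneg_fps_def by (auto simp: fps_mult_nth intro!: sum_nonneg)

lemma nonneg_fps_sum [simp]: "(\<And>i. i \<in> I \<Longrightarrow> nonneg_fps (F i)) \<Longrightarrow> nonneg_fps (sum F I)"
  unfolding nonneg_fps_def by (auto simp: fps_sum_nth intro!: sum_nonneg)

lemma fps_nth_mult_geom_fps_ge:
  assumes "nonneg_fps F" and "b > 0"
  shows "fps_nth F q / b \<le> fps_nth (F * geom_fps b) q"
proof -
  have "fps_nth F q * fps_nth (geom_fps b) (q - q)
      \<le> (\<Sum>i=0..q. fps_nth F i * fps_nth (geom_fps b) (q - i))"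
    using assms by (intro member_le_sum) (auto simp: nonneg_fps_nth)
  then show ?thesis by (simp add: fps_mult_nth)
qed

lemma has_sum_fps_nth_mult:
  fixes F :: "'a \<Rightarrow> real fps"
  assumes "\<And>i. ((\<lambda>x. c x * fps_nth (F x) i) has_sum fps_nth S i) A"
  shows "((\<lambda>x. c x * fps_nth (F x * K) p) has_sum fps_nth (S * K) p) A"
proof -
  have "((\<lambda>x. \<Sum>i=0..p. c x * fps_nth (F x) i * fps_nth K (p - i))
          has_sum (\<Sum>i=0..p. fps_nth S i * fps_nth K (p - i))) A"
    by (rule has_sum_sum) (auto intro: has_sum_cmult_left assms)
  then show ?thesis by (simp add: fps_mult_nth sum_distrib_left mult.assoc)
qed

section \<open>Two telescoping series of beta power series\<close>

text \<open>\<open>beta_fps m n\<close> is the power series \<open>\<Prod>j=1..m. j / (n + j - X)\<close>, that is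
  \<open>m B(m, n + 1 - X)\<close> with Euler's beta function.\<close>

primrec beta_fps :: "nat \<Rightarrow> nat \<Rightarrow> real fps" where
  "beta_fps 0 n = 1"
| "beta_fps (Suc m) n = fps_const (real (Suc m)) * beta_fps m n * geom_fps (real (Suc m + n))"

declare beta_fps.simps(2) [simp del]

lemma nonneg_fps_beta_fps [simp]: "nonneg_fps (beta_fps m n)"
  by (induction m) (simp_all add: beta_fps.simps)

lemma beta_fps_nth_nonneg: "fps_nth (beta_fps m n) q \<ge> 0"
  by (simp add: nonneg_fps_nth)

lemma beta_fps_recurrence:
  "(fps_const (real (Suc m + n)) - fps_X) * beta_fps (Suc m) n
     = fps_const (real (Suc m)) * beta_fps m n"
  unfolding beta_fps.simps(2) by (rule geom_fps_cancel) simp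

lemma beta_fps_shift:
  "(fps_const (real (Suc b)) - fps_X) * beta_fps m b
     = (fps_const (real (m + Suc b)) - fps_X) * beta_fps m (Suc b)"
proof (induction m)
  case 0
  then show ?case by simp
next
  case (Suc m)
  let ?c = "fps_const (real (Suc m))"
  have "(fps_const (real (Suc b)) - fps_X) * beta_fps (Suc m) b
      = ?c * (((fps_const (real (Suc b)) - fps_X) * beta_fps m b) * geom_fps (real (Suc m + b)))"
    by (simp add: ac_simps beta_fps.simps)
  also have "\<dots> = ?c * ((fps_const (real (Suc m + b)) - fps_X)
                         * (beta_fps m (Suc b) * geom_fps (real (Suc m + b))))"
    using Suc.IH by (simp add: ac_simps)
  also have "\<dots> = ?c * beta_fps m (Suc b)"
    by (subst geom_fps_cancel) auto
  also have "\<dots> = (fps_const (real (Suc m + Suc b)) - fps_X)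
                   * (?c * beta_fps m (Suc b) * geom_fps (real (Suc m + Suc b)))"
    by (subst geom_fps_cancel) auto
  finally show ?case by (simp add: beta_fps.simps)
qed

lemma beta_fps_diff:
  "beta_fps m b - beta_fps m (Suc b)
     = fps_const (real m) * beta_fps m (Suc b) * geom_fps (real (Suc b))"
proof -
  let ?c = "fps_const (real (Suc b))" and ?\<Delta> = "beta_fps m b - beta_fps m (Suc b)"
  have split: "fps_const (real (m + Suc b)) - fps_X = fps_const (real m) + (?c - fps_X)"
    by simp
  have "(?c - fps_X) * ?\<Delta>
      = (fps_const (real (m + Suc b)) - fps_X) * beta_fps m (Suc b)
        - (?c - fps_X) * beta_fps m (Suc b)"
    by (simp only: right_diff_distrib beta_fps_shift)
  also have "\<dots> = fps_const (real m) * beta_fps m (Suc b)"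
    by (simp only: split distrib_right add_diff_cancel_right')
  finally have diff: "(?c - fps_X) * ?\<Delta> = fps_const (real m) * beta_fps m (Suc b)" .
  have "?\<Delta> = (?c - fps_X) * (?\<Delta> * geom_fps (real (Suc b)))"
    by (subst geom_fps_cancel) auto
  also have "\<dots> = fps_const (real m) * beta_fps m (Suc b) * geom_fps (real (Suc b))"
    by (simp only: mult.assoc [symmetric] diff)
  finally show ?thesis .
qed

lemma beta_fps_div_telescope:
  assumes "n \<noteq> 0"
  shows "fps_const (1 / real (Suc m)) * beta_fps (Suc m) n
           = geom_fps (real n) * (beta_fps m n - beta_fps (Suc m) n)"
proof -
  let ?c = "fps_const (real (Suc m))" and ?d = "fps_const (real n) - fps_X"
  have split: "fps_const (real (Suc m + n)) - fps_X = ?c + ?d"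
    by simp
  have "(?c + ?d) * beta_fps (Suc m) n = ?c * beta_fps m n"
    using beta_fps_recurrence[of m n] by (simp only: split)
  then have diff: "?d * beta_fps (Suc m) n = ?c * (beta_fps m n - beta_fps (Suc m) n)"
    by (metis add_diff_cancel_left' distrib_right right_diff_distrib)
  have "fps_const (1 / real (Suc m)) * beta_fps (Suc m) n
      = geom_fps (real n) * (fps_const (1 / real (Suc m)) * (?d * beta_fps (Suc m) n))"
    using geom_fps_inverse[of "real n"] assms by (simp add: ac_simps)
  also have "\<dots> = geom_fps (real n) * (beta_fps m n - beta_fps (Suc m) n)"
    by (simp only: diff mult.assoc [symmetric] fps_const_mult [symmetric]) simp
  finally show ?thesis .
qed

lemma has_sum_beta_fps_div:
  assumes "n \<ge> 1"
  shows "((\<lambda>a. inverse (real a) * fps_nth (beta_fps a n) q)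
           has_sum fps_nth (geom_fps (real n)) q) {1..}"
proof -
  define r where "r i N = fps_nth (geom_fps (real n) * beta_fps N n) i" for i N
  have step: "inverse (real (Suc N)) * fps_nth (beta_fps (Suc N) n) i = r i N - r i (Suc N)" for i N
    using arg_cong[OF beta_fps_div_telescope[of n N], of "\<lambda>F. fps_nth F i"] assms
    by (simp add: r_def right_diff_distrib divide_inverse)
  have r_nonneg: "r i N \<ge> 0" for i N
    unfolding r_def by (simp add: nonneg_fps_nth)
  have dec: "decseq (r i)" for i
    unfolding decseq_Suc_iff using step beta_fps_nth_nonneg
    by (metis diff_ge_0_iff_ge inverse_nonnegative_iff_nonnegative of_nat_0_le_iff mult_nonneg_nonneg)
  have "summable (\<lambda>N. inverse (real (Suc N)) * fps_nth (beta_fps (Suc N) n) i)" for i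
    unfolding step by (rule decseq_telescope_summable[OF dec r_nonneg])
  then have summable_div: "summable (\<lambda>N. inverse (real N) * fps_nth (beta_fps N n) i)" for i
    by (subst summable_Suc_iff [symmetric])
  have "summable (\<lambda>N. \<Sum>i=0..q. fps_nth (geom_fps (real n)) i
                                 * (inverse (real N) * fps_nth (beta_fps N n) (q - i)))"
    by (intro summable_sum summable_mult summable_div)
  then have "summable (\<lambda>N. r q N / real (N + 0))"
    unfolding r_def fps_mult_nth
    by (simp add: sum_divide_distrib sum_distrib_left divide_inverse ac_simps del: geom_fps_nth)
  then have "r q \<longlonglongrightarrow> 0"
    by (rule decseq_tendsto_0_if_summable_div[OF dec r_nonneg])
  then have "(\<lambda>N. r q N - r q (Suc N)) sums fps_nth (geom_fps (real n)) q"
    using telescope_sums'[of "r q" 0] by (simp add: r_def)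
  then have "(\<lambda>j. inverse (real (Suc j)) * fps_nth (beta_fps (Suc j) n) q)
               sums fps_nth (geom_fps (real n)) q"
    by (simp only: step)
  then have "(\<lambda>j. inverse (real (j + 1)) * fps_nth (beta_fps (j + 1) n) q)
               sums fps_nth (geom_fps (real n)) q"
    by (simp only: Suc_eq_plus1)
  then show ?thesis
    by (rule has_sum_atLeast_if_sums) (simp add: beta_fps_nth_nonneg)
qed

lemma has_sum_beta_fps_geom:
  assumes "m \<ge> 1"
  shows "((\<lambda>b. real m * fps_nth (beta_fps m b * geom_fps (real b)) q)
           has_sum fps_nth (beta_fps m n) q) {n<..}"
proof -
  define r where "r j = fps_nth (beta_fps m (n + j)) q" for j
  define t where "t j = real m * fps_nth (beta_fps m (Suc (n + j)) * geom_fps (real (Suc (n + j)))) q"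
    for j
  have step: "t j = r j - r (Suc j)" for j
    using arg_cong[OF beta_fps_diff[of m "n + j"], of "\<lambda>F. fps_nth F q"]
    by (simp add: r_def t_def mult.assoc)
  have r_nonneg: "r j \<ge> 0" for j
    by (simp add: r_def beta_fps_nth_nonneg)
  have t_ge: "real m * (r (Suc j) / real (Suc j + n)) \<le> t j" for j
    unfolding r_def t_def
    using fps_nth_mult_geom_fps_ge[of "beta_fps m (Suc (n + j))" "real (Suc (n + j))" q]
    by (intro mult_left_mono) (auto simp: add.commute)
  have dec: "decseq r"
    unfolding decseq_Suc_iff using step t_ge r_nonneg assms
    by (metis diff_ge_0_iff_ge divide_nonneg_nonneg mult_nonneg_nonneg of_nat_0_le_iff order_trans)
  have "summable t"
    unfolding step[abs_def] by (rule decseq_telescope_summable[OF dec r_nonneg])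
  then have "summable (\<lambda>j. real m * (r (Suc j) / real (Suc j + n)))"
    by (rule summable_comparison_test'[where N = 0]) (use t_ge r_nonneg in auto)
  then have "real m = 0 \<or> summable (\<lambda>j. r (Suc j) / real (Suc j + n))"
    by (simp only: summable_cmult_iff)
  then have "summable (\<lambda>j. r (Suc j) / real (Suc j + n))"
    using assms by simp
  then have "summable (\<lambda>j. r j / real (j + n))"
    by (subst summable_Suc_iff [symmetric])
  then have "r \<longlonglongrightarrow> 0"
    by (rule decseq_tendsto_0_if_summable_div[OF dec r_nonneg])
  then have "t sums fps_nth (beta_fps m n) q"
    using telescope_sums'[of r 0] by (simp add: r_def step[abs_def])
  moreover have "t = (\<lambda>j. real m * fps_nth (beta_fps m (j + Suc n) * geom_fps (real (j + Suc n))) q)"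
    by (simp add: t_def fun_eq_iff add.commute)
  ultimately have "((\<lambda>b. real m * fps_nth (beta_fps m b * geom_fps (real b)) q)
                     has_sum fps_nth (beta_fps m n) q) {Suc n..}"
    by (intro has_sum_atLeast_if_sums) (simp_all add: nonneg_fps_nth)
  then show ?thesis
    by (simp add: atLeast_Suc_greaterThan)
qed

section \<open>Truncated multiple zeta sums\<close>

text \<open>\<open>chain_sum (>) ks b\<close> and \<open>chain_sum (\<ge>) ks b\<close> are the partial sums of \<open>mzv ks\<close>
  and \<open>mzv_star ks\<close> over \<open>m\<^sub>1 < b\<close> and \<open>m\<^sub>1 \<le> b\<close> respectively.\<close>

definition chains :: "(nat \<Rightarrow> nat \<Rightarrow> bool) \<Rightarrow> nat \<Rightarrow> nat \<Rightarrow> nat list set" where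
  "chains R i b = {l. length l = i \<and> sorted_wrt R l \<and> (\<forall>x\<in>set l. 1 \<le> x \<and> R b x)}"

definition chain_sum :: "(nat \<Rightarrow> nat \<Rightarrow> bool) \<Rightarrow> nat list \<Rightarrow> nat \<Rightarrow> real" where
  "chain_sum R ks b = (\<Sum>l\<in>chains R (length ks) b. \<Prod>i<length ks. 1 / real (l ! i) ^ (ks ! i))"

lemma finite_chains:
  assumes "finite {x. R b x}"
  shows "finite (chains R i b)"
proof (rule finite_subset)
  show "chains R i b \<subseteq> {l. set l \<subseteq> {x. R b x} \<and> length l = i}"
    by (auto simp: chains_def)
  show "finite {l. set l \<subseteq> {x. R b x} \<and> length l = i}"
    using assms by (rule finite_lists_length_eq)
qed

lemma chains_0: "chains R 0 b = {[]}"
  by (auto simp: chains_def)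

lemma chains_Suc:
  assumes "transp R"
  shows "chains R (Suc i) b = (\<lambda>(m, l). m # l) ` Sigma {m. 1 \<le> m \<and> R b m} (chains R i)"
proof (intro equalityI subsetI)
  fix l assume "l \<in> chains R (Suc i) b"
  then obtain m l' where "l = m # l'" and "(m, l') \<in> Sigma {m. 1 \<le> m \<and> R b m} (chains R i)"
    by (cases l) (auto simp: chains_def)
  then show "l \<in> (\<lambda>(m, l). m # l) ` Sigma {m. 1 \<le> m \<and> R b m} (chains R i)"
    by force
next
  fix l assume "l \<in> (\<lambda>(m, l). m # l) ` Sigma {m. 1 \<le> m \<and> R b m} (chains R i)"
  then show "l \<in> chains R (Suc i) b"
    using assms by (auto simp: chains_def) (meson transpD)
qed

lemma prod_lessThan_Cons:
  "(\<Prod>i<Suc (length ks). 1 / real ((m # l) ! i) ^ ((k # ks) ! i))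
     = (\<Prod>i<length ks. 1 / real (l ! i) ^ (ks ! i)) / real m ^ k"
  by (simp del: prod.lessThan_Suc add: prod.lessThan_Suc_shift)

lemma chain_sum_Nil: "chain_sum R [] b = 1"
  by (simp add: chain_sum_def chains_0)

lemma chain_sum_nonneg: "chain_sum R ks b \<ge> 0"
  unfolding chain_sum_def by (intro sum_nonneg prod_nonneg) auto

lemma chain_sum_Cons:
  assumes "transp R" and "\<And>b. finite {x. R b x}"
  shows "chain_sum R (k # ks) b = (\<Sum>m | 1 \<le> m \<and> R b m. chain_sum R ks m / real m ^ k)"
proof -
  have inj: "inj_on (\<lambda>(m, l). m # l) (Sigma {m. 1 \<le> m \<and> R b m} (chains R (length ks)))"
    by (auto simp: inj_on_def)
  have "chain_sum R (k # ks) b = (\<Sum>(m, l)\<in>Sigma {m. 1 \<le> m \<and> R b m} (chains R (length ks)).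
          \<Prod>i<Suc (length ks). 1 / real ((m # l) ! i) ^ ((k # ks) ! i))"
    unfolding chain_sum_def length_Cons chains_Suc[OF assms(1)]
    by (subst sum.reindex[OF inj]) (simp add: case_prod_unfold)
  also have "\<dots> = (\<Sum>m | 1 \<le> m \<and> R b m. \<Sum>l\<in>chains R (length ks) m.
          (\<Prod>i<length ks. 1 / real (l ! i) ^ (ks ! i)) / real m ^ k)"
    using assms(2)
    by (subst sum.Sigma) (auto simp del: prod.lessThan_Suc simp: finite_chains prod_lessThan_Cons)
  also have "\<dots> = (\<Sum>m | 1 \<le> m \<and> R b m. chain_sum R ks m / real m ^ k)"
    by (simp add: chain_sum_def sum_divide_distrib)
  finally show ?thesis .
qed

lemma has_sum_sorted_lists_Cons:
  assumes "\<And>b. finite {x. R b x}"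
    and "((\<lambda>m. chain_sum R ks m / real m ^ k) has_sum S) {1..}"
  shows "((\<lambda>ms. \<Prod>i<length (k # ks). 1 / real (ms ! i) ^ ((k # ks) ! i)) has_sum S)
           {ms. length ms = length (k # ks) \<and> sorted_wrt R ms \<and> (\<forall>m\<in>set ms. m \<ge> 1)}"
proof -
  let ?f = "\<lambda>ms. \<Prod>i<length (k # ks). 1 / real (ms ! i) ^ ((k # ks) ! i)"
  let ?S = "Sigma {1..} (chains R (length ks))"
  have "((\<lambda>(m, l). ?f (m # l)) has_sum S) ?S"
  proof (rule has_sum_Sigma_nonneg[OF _ _ assms(2)])
    show "0 \<le> ?f (m # l)" for m l
      by (intro prod_nonneg) auto
    show "((\<lambda>l. ?f (m # l)) has_sum chain_sum R ks m / real m ^ k) (chains R (length ks) m)" for m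
    proof -
      have "(\<Sum>l\<in>chains R (length ks) m. ?f (m # l)) = chain_sum R ks m / real m ^ k"
        by (simp del: prod.lessThan_Suc add: chain_sum_def sum_divide_distrib prod_lessThan_Cons)
      then show ?thesis
        using assms(1) by (intro has_sum_finiteI finite_chains) auto
    qed
  qed
  then have "((?f \<circ> (\<lambda>(m, l). m # l)) has_sum S) ?S"
    by (simp only: comp_def case_prod_unfold)
  moreover have "inj_on (\<lambda>(m, l). m # l) ?S"
    by (auto simp: inj_on_def)
  ultimately have "(?f has_sum S) ((\<lambda>(m, l). m # l) ` ?S)"
    by (simp add: has_sum_reindex)
  moreover have "(\<lambda>(m, l). m # l) ` ?S
      = {ms. length ms = length (k # ks) \<and> sorted_wrt R ms \<and> (\<forall>m\<in>set ms. m \<ge> 1)}"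
  proof (intro equalityI subsetI)
    fix ms assume "ms \<in> {ms. length ms = length (k # ks) \<and> sorted_wrt R ms \<and> (\<forall>m\<in>set ms. m \<ge> 1)}"
    then obtain m l where "ms = m # l" and "(m, l) \<in> ?S"
      by (cases ms) (auto simp: chains_def)
    then show "ms \<in> (\<lambda>(m, l). m # l) ` ?S"
      by force
  qed (auto simp: chains_def)
  ultimately show ?thesis
    by simp
qed

lemma mzv_Cons:
  assumes "((\<lambda>m. chain_sum (>) ks m / real m ^ k) has_sum S) {1..}"
  shows "mzv (k # ks) = S"
  unfolding mzv_def by (intro infsumI has_sum_sorted_lists_Cons assms) simp

lemma mzv_star_Cons:
  assumes "((\<lambda>m. chain_sum (\<ge>) ks m / real m ^ k) has_sum S) {1..}"
  shows "mzv_star (k # ks) = S"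
  unfolding mzv_star_def by (intro infsumI has_sum_sorted_lists_Cons assms) simp

lemma beta_fps_0_nth_0: "fps_nth (beta_fps m 0) 0 = 1"
  by (induction m) (simp_all add: beta_fps.simps)

lemma beta_fps_0_nth_Suc:
  "fps_nth (beta_fps m 0) (Suc p) = (\<Sum>j=1..m. fps_nth (beta_fps j 0) p / real j)"
proof (induction m)
  case 0
  then show ?case by simp
next
  case (Suc m)
  have "real (Suc m) * fps_nth (beta_fps (Suc m) 0) (Suc p) - fps_nth (beta_fps (Suc m) 0) p
      = real (Suc m) * fps_nth (beta_fps m 0) (Suc p)"
    using arg_cong[OF beta_fps_recurrence[of m 0], of "\<lambda>F. fps_nth F (Suc p)"]
    by (simp only: fps_nth_const_minus_X_mult fps_mult_left_const_nth) simp
  then have "fps_nth (beta_fps (Suc m) 0) (Suc p)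
      = fps_nth (beta_fps m 0) (Suc p) + fps_nth (beta_fps (Suc m) 0) p / real (Suc m)"
    by (simp add: field_simps)
  with Suc.IH show ?case
    by simp
qed

lemma beta_fps_0_nth: "fps_nth (beta_fps m 0) p = chain_sum (\<ge>) (replicate p 1) m"
proof (induction p arbitrary: m)
  case 0
  then show ?case by (simp add: beta_fps_0_nth_0 chain_sum_Nil)
next
  case (Suc p)
  have "{j. 1 \<le> j \<and> j \<le> m} = {1..m}"
    by auto
  then show ?case
    by (simp add: beta_fps_0_nth_Suc chain_sum_Cons Suc.IH)
qed

lemma finite_wcomps: "finite (wcomps i t)"
proof (rule finite_subset)
  show "wcomps i t \<subseteq> {l. set l \<subseteq> {0..t} \<and> length l = i}"
    by (auto simp: wcomps_def member_le_sum_list)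
  show "finite {l. set l \<subseteq> {0..t} \<and> length l = i}"
    by (rule finite_lists_length_eq) simp
qed

lemma wcomps_0: "wcomps 0 t = (if t = 0 then {[]} else {})"
  by (auto simp: wcomps_def)

lemma wcomps_Suc: "wcomps (Suc i) t = (\<lambda>(r, a). r # a) ` Sigma {0..t} (\<lambda>r. wcomps i (t - r))"
proof (intro equalityI subsetI)
  fix l assume "l \<in> wcomps (Suc i) t"
  then obtain r a where "l = r # a" and "(r, a) \<in> Sigma {0..t} (\<lambda>r. wcomps i (t - r))"
    by (cases l) (auto simp: wcomps_def)
  then show "l \<in> (\<lambda>(r, a). r # a) ` Sigma {0..t} (\<lambda>r. wcomps i (t - r))"
    by force
qed (auto simp: wcomps_def)

primrec chain_fps :: "nat \<Rightarrow> nat \<Rightarrow> real fps" where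
  "chain_fps 0 b = 1"
| "chain_fps (Suc i) b = (\<Sum>n\<in>{1..<b}. geom_fps (real n) * chain_fps i n)"

lemma nonneg_fps_chain_fps [simp]: "nonneg_fps (chain_fps i b)"
  by (induction i arbitrary: b) simp_all

lemma chain_fps_nth: "fps_nth (chain_fps i b) t = (\<Sum>a\<in>wcomps i t. chain_sum (>) (map Suc a) b)"
proof (induction i arbitrary: b t)
  case 0
  then show ?case by (simp add: wcomps_0 chain_sum_Nil)
next
  case (Suc i)
  have inj: "inj_on (\<lambda>(r, a). r # a) (Sigma {0..t} (\<lambda>r. wcomps i (t - r)))"
    by (auto simp: inj_on_def)
  have lt: "{n. Suc 0 \<le> n \<and> n < c} = {Suc 0..<c}" for c :: nat
    by auto
  let ?z = "\<lambda>r a n. chain_sum (>) (map Suc a) n / real n ^ Suc r"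
  have "(\<Sum>a\<in>wcomps (Suc i) t. chain_sum (>) (map Suc a) b)
      = (\<Sum>r\<in>{0..t}. \<Sum>a\<in>wcomps i (t - r). chain_sum (>) (Suc r # map Suc a) b)"
    unfolding wcomps_Suc
    by (subst sum.reindex[OF inj]) (simp add: case_prod_unfold sum.Sigma finite_wcomps)
  also have "\<dots> = (\<Sum>r\<in>{0..t}. \<Sum>a\<in>wcomps i (t - r). \<Sum>n\<in>{1..<b}. ?z r a n)"
    by (simp add: chain_sum_Cons lt)
  also have "\<dots> = (\<Sum>r\<in>{0..t}. \<Sum>n\<in>{1..<b}. \<Sum>a\<in>wcomps i (t - r). ?z r a n)"
    by (subst sum.swap) simp
  also have "\<dots> = (\<Sum>n\<in>{1..<b}. \<Sum>r\<in>{0..t}. \<Sum>a\<in>wcomps i (t - r). ?z r a n)"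
    by (rule sum.swap)
  also have "\<dots> = (\<Sum>n\<in>{1..<b}. \<Sum>r\<in>{0..t}.
                      fps_nth (geom_fps (real n)) r * fps_nth (chain_fps i n) (t - r))"
    by (simp add: Suc.IH sum_divide_distrib)
  also have "\<dots> = fps_nth (chain_fps (Suc i) b) t"
    by (simp add: fps_sum_nth fps_mult_nth)
  finally show ?case ..
qed

section \<open>Exchanging the order of summation\<close>

lemma has_sum_beta_fps_chain_fps:
  assumes "m \<ge> 1"
  shows "((\<lambda>b. fps_nth (beta_fps m b * geom_fps (real b) * chain_fps i b) p)
           has_sum fps_nth (beta_fps m 0) p / real m ^ Suc i) {1..}"
proof (induction i)
  case 0
  have "((\<lambda>b. real m * fps_nth (beta_fps m b * geom_fps (real b)) p)
          has_sum fps_nth (beta_fps m 0) p) {0<..}"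
    by (rule has_sum_beta_fps_geom[OF assms])
  then show ?case
    using assms by (simp add: has_sum_cmult_right_iff atLeast_Suc_greaterThan)
next
  case (Suc i)
  let ?K = "\<lambda>n. geom_fps (real n) * chain_fps i n"
  show ?case
  proof (rule has_sum_swap_nonneg[where f = "\<lambda>n b. fps_nth (beta_fps m b * geom_fps (real b) * ?K n) p"
        and A = "{1..}" and B = "\<lambda>n. {n<..}" and D = "\<lambda>b. {1..<b}"])
    show "0 \<le> fps_nth (beta_fps m b * geom_fps (real b) * ?K n) p" for n b
      by (simp add: nonneg_fps_nth)
    show "((\<lambda>b. fps_nth (beta_fps m b * geom_fps (real b) * ?K n) p)
            has_sum fps_nth (beta_fps m n * ?K n) p / real m) {n<..}" for n
      using has_sum_fps_nth_mult[where c = "\<lambda>_. real m", OF has_sum_beta_fps_geom[OF assms]] assms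
      by (simp add: has_sum_cmult_right_iff)
    show "((\<lambda>n. fps_nth (beta_fps m n * ?K n) p / real m)
            has_sum fps_nth (beta_fps m 0) p / real m ^ Suc (Suc i)) {1..}"
      using has_sum_divide_const[OF Suc.IH, of "real m"] by (simp add: ac_simps)
    show "n \<in> {1..} \<and> b \<in> {n<..} \<longleftrightarrow> b \<in> {1..} \<and> n \<in> {1..<b}" for n b :: nat
      by auto
    show "((\<lambda>n. fps_nth (beta_fps m b * geom_fps (real b) * ?K n) p)
            has_sum fps_nth (beta_fps m b * geom_fps (real b) * chain_fps (Suc i) b) p) {1..<b}"
      for b
      by (intro has_sum_finiteI) (simp_all add: sum_distrib_left fps_sum_nth)
  qed
qed

lemma has_sum_geom_fps_square_chain_fps:
  assumes "((\<lambda>m. fps_nth (beta_fps m 0) p / real m ^ (i + 2)) has_sum S) {1..}"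
  shows "((\<lambda>b. fps_nth (geom_fps (real b) * geom_fps (real b) * chain_fps i b) p) has_sum S) {1..}"
proof (rule has_sum_swap_nonneg[where A = "{1..}" and B = "\<lambda>_. {1..}" and D = "\<lambda>_. {1..}"
      and f = "\<lambda>m b. inverse (real m) * fps_nth (beta_fps m b * (geom_fps (real b) * chain_fps i b)) p",
      OF _ _ assms])
  show "0 \<le> inverse (real m) * fps_nth (beta_fps m b * (geom_fps (real b) * chain_fps i b)) p" for m b
    by (simp add: nonneg_fps_nth)
  show "((\<lambda>b. inverse (real m) * fps_nth (beta_fps m b * (geom_fps (real b) * chain_fps i b)) p)
          has_sum fps_nth (beta_fps m 0) p / real m ^ (i + 2)) {1..}" if "m \<in> {1..}" for m
  proof -
    have "m \<ge> 1"
      using that by simp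
    from has_sum_cmult_right[OF has_sum_beta_fps_chain_fps[OF this], where c = "inverse (real m)"]
    show ?thesis
      by (simp add: mult.assoc field_simps)
  qed
  show "((\<lambda>m. inverse (real m) * fps_nth (beta_fps m b * (geom_fps (real b) * chain_fps i b)) p)
          has_sum fps_nth (geom_fps (real b) * geom_fps (real b) * chain_fps i b) p) {1..}"
    if "b \<in> {1..}" for b
    using has_sum_fps_nth_mult[where c = "\<lambda>a. inverse (real a)", OF has_sum_beta_fps_div, of b] that
    by (simp add: mult.assoc)
qed auto

lemma beta_fps_0_nth_le:
  "fps_nth (beta_fps m 0) p \<le> real (Suc m) * fps_nth (beta_fps m 1 * geom_fps 1) p"
proof -
  have "beta_fps m 0 = ((fps_const 1 - fps_X) * beta_fps m 0) * geom_fps 1"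
    using geom_fps_cancel[of 1 "beta_fps m 0"] by (simp add: mult.assoc)
  also have "\<dots> = (fps_const (real (Suc m)) - fps_X) * (beta_fps m 1 * geom_fps 1)"
    using beta_fps_shift[of 0 m] by (simp add: mult.assoc)
  finally have eq: "beta_fps m 0 = (fps_const (real (Suc m)) - fps_X) * (beta_fps m 1 * geom_fps 1)" .
  have "0 \<le> fps_nth (beta_fps m 1 * geom_fps 1) (p - 1)"
    by (simp add: nonneg_fps_nth)
  then show ?thesis
    unfolding eq fps_nth_const_minus_X_mult by simp
qed

lemma has_sum_beta_fps_mzv_star:
  "((\<lambda>m. fps_nth (beta_fps m 0) p / real m ^ (i + 2))
      has_sum mzv_star ((i + 2) # replicate p 1)) {1..}"
proof -
  let ?c = "\<lambda>m. fps_nth (beta_fps m 1 * geom_fps 1) p"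
  have "(\<lambda>m. fps_nth (beta_fps m 0) p / real m ^ (i + 2)) summable_on {1..}"
  proof (rule summable_on_comparison_test)
    have "((\<lambda>m. inverse (real m) * ?c m) has_sum fps_nth (geom_fps 1 * geom_fps 1) p) {1..}"
      using has_sum_fps_nth_mult[OF has_sum_beta_fps_div[of 1]] by simp
    then show "(\<lambda>m. 2 * (inverse (real m) * ?c m)) summable_on {1..}"
      by (intro summable_on_cmult_right has_sum_imp_summable)
    show "0 \<le> fps_nth (beta_fps m 0) p / real m ^ (i + 2)" for m
      by (simp add: beta_fps_nth_nonneg)
    show "fps_nth (beta_fps m 0) p / real m ^ (i + 2) \<le> 2 * (inverse (real m) * ?c m)"
      if "m \<in> {1..}" for m
    proof -
      have m: "real m \<ge> 1" using that by simp
      have c: "?c m \<ge> 0"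
        by (simp add: nonneg_fps_nth)
      have "fps_nth (beta_fps m 0) p / real m ^ (i + 2) \<le> fps_nth (beta_fps m 0) p / real m ^ 2"
        using m by (intro divide_left_mono beta_fps_nth_nonneg power_increasing) auto
      also have "\<dots> \<le> (2 * real m * ?c m) / real m ^ 2"
      proof (intro divide_right_mono order_trans[OF beta_fps_0_nth_le])
        show "real (Suc m) * ?c m \<le> 2 * real m * ?c m"
          using m c by (intro mult_right_mono) auto
      qed simp
      also have "\<dots> = 2 * (inverse (real m) * ?c m)"
        using m by (simp add: power2_eq_square field_simps)
      finally show ?thesis .
    qed
  qed
  then have hs: "((\<lambda>m. fps_nth (beta_fps m 0) p / real m ^ (i + 2))
                    has_sum (\<Sum>\<^sub>\<infinity>m\<in>{1..}. fps_nth (beta_fps m 0) p / real m ^ (i + 2))) {1..}"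
    by (rule has_sum_infsum)
  then have "mzv_star ((i + 2) # replicate p 1)
      = (\<Sum>\<^sub>\<infinity>m\<in>{1..}. fps_nth (beta_fps m 0) p / real m ^ (i + 2))"
    by (intro mzv_star_Cons) (simp add: beta_fps_0_nth)
  with hs show ?thesis
    by simp
qed

lemma fps_nth_geom_fps_square_chain_fps:
  "fps_nth (geom_fps (real b) * geom_fps (real b) * chain_fps i b) p
     = (\<Sum>(j, a)\<in>Sigma {0..p} (\<lambda>j. wcomps i (p - j)).
          real (Suc j) * (chain_sum (>) (map Suc a) b / real b ^ (j + 2)))"
proof -
  have "fps_nth (geom_fps (real b) * geom_fps (real b) * chain_fps i b) p
      = (\<Sum>j=0..p. real (Suc j) / real b ^ (j + 2)
                    * (\<Sum>a\<in>wcomps i (p - j). chain_sum (>) (map Suc a) b))"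
    by (simp only: fps_mult_nth[of "geom_fps (real b) * geom_fps (real b)"]
                   fps_nth_geom_fps_square chain_fps_nth)
  then show ?thesis
    by (simp add: sum_distrib_left sum.Sigma finite_wcomps)
qed

lemma mzv_star_eq_sum_mzv:
  "mzv_star ((i + 2) # replicate p 1)
     = (\<Sum>j=0..p. \<Sum>a\<in>wcomps i (p - j). real (Suc j) * mzv ((j + 2) # map Suc a))"
proof -
  let ?P = "Sigma {0..p} (\<lambda>j. wcomps i (p - j))"
  define g where "g x b = chain_sum (>) (map Suc (snd x)) b / real b ^ (fst x + 2)" for x b
  have fin: "finite ?P"
    by (simp add: finite_wcomps)
  have total: "((\<lambda>b. \<Sum>x\<in>?P. real (Suc (fst x)) * g x b)
                  has_sum mzv_star ((i + 2) # replicate p 1)) {1..}"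
    using has_sum_geom_fps_square_chain_fps[OF has_sum_beta_fps_mzv_star]
    by (simp add: fps_nth_geom_fps_square_chain_fps g_def case_prod_unfold)
  have "(g x has_sum mzv ((fst x + 2) # map Suc (snd x))) {1..}" if "x \<in> ?P" for x
  proof -
    have "(\<lambda>b. real (Suc (fst x)) * g x b) summable_on {1..}"
      by (rule summable_on_summand_nonneg[OF fin that _ has_sum_imp_summable[OF total]])
         (simp add: g_def chain_sum_nonneg)
    then have "g x summable_on {1..}"
      by (simp add: summable_on_cmult_right')
    then have "(g x has_sum infsum (g x) {1..}) {1..}"
      by (rule has_sum_infsum)
    moreover have "mzv ((fst x + 2) # map Suc (snd x)) = infsum (g x) {1..}"
      using calculation unfolding g_def by (rule mzv_Cons)
    ultimately show ?thesis
      by simp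
  qed
  then have "((\<lambda>b. \<Sum>x\<in>?P. real (Suc (fst x)) * g x b)
               has_sum (\<Sum>x\<in>?P. real (Suc (fst x)) * mzv ((fst x + 2) # map Suc (snd x)))) {1..}"
    by (intro has_sum_sum fin has_sum_cmult_right)
  then show ?thesis
    using has_sum_unique[OF total] by (simp add: sum.Sigma finite_wcomps case_prod_unfold)
qed

section \<open>Regrouping over weak compositions\<close>

lemma sum_wcomps_last:
  assumes "k \<ge> 1"
  shows "(\<Sum>a\<in>wcomps k s. f (last a) (butlast a)) = (\<Sum>j=0..s. \<Sum>a\<in>wcomps (k - 1) (s - j). f j a)"
proof -
  have eq: "wcomps k s = (\<lambda>(j, a). a @ [j]) ` Sigma {0..s} (\<lambda>j. wcomps (k - 1) (s - j))"
  proof (intro equalityI subsetI)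
    fix l assume l: "l \<in> wcomps k s"
    then have "l \<noteq> []"
      using assms by (auto simp: wcomps_def)
    then have l_snoc: "l = butlast l @ [last l]"
      by simp
    then have "sum_list l = sum_list (butlast l) + last l"
      using sum_list_append[of "butlast l" "[last l]"] by simp
    then have "(last l, butlast l) \<in> Sigma {0..s} (\<lambda>j. wcomps (k - 1) (s - j))"
      using l by (auto simp: wcomps_def)
    then show "l \<in> (\<lambda>(j, a). a @ [j]) ` Sigma {0..s} (\<lambda>j. wcomps (k - 1) (s - j))"
      using l_snoc by force
  qed (use assms in \<open>auto simp: wcomps_def\<close>)
  have inj: "inj_on (\<lambda>(j, a). a @ [j]) (Sigma {0..s} (\<lambda>j. wcomps (k - 1) (s - j)))"
    by (auto simp: inj_on_def)
  show ?thesis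
    unfolding eq by (subst sum.reindex[OF inj]) (simp add: case_prod_unfold sum.Sigma finite_wcomps)
qed

lemma sum_triangle_eq_weighted_sum:
  fixes g :: "nat \<Rightarrow> real"
  shows "(\<Sum>t=0..p. \<Sum>j=0..p - t. g (j + t)) = (\<Sum>J=0..p. real (Suc J) * g J)"
proof (induction p)
  case 0
  then show ?case by simp
next
  case (Suc p)
  have "(\<Sum>t=0..p. \<Sum>j=0..Suc p - t. g (j + t)) = (\<Sum>t=0..p. (\<Sum>j=0..p - t. g (j + t)) + g (Suc p))"
    by (intro sum.cong) (auto simp: Suc_diff_le)
  then show ?case
    using Suc.IH by (simp add: sum.distrib algebra_simps)
qed

lemma sum_shifted_wcomps_eq_weighted_sum:
  fixes g :: "nat \<Rightarrow> nat list \<Rightarrow> real"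
  assumes "k \<ge> 1"
  shows "(\<Sum>t=1..n+1. \<Sum>a\<in>wcomps k (n + 1 - t). g (last a + t) (butlast a))
           = (\<Sum>a\<in>wcomps k n. real (last a + 1) * g (last a + 1) (butlast a))"
proof -
  define \<Psi> where "\<Psi> J = (\<Sum>a\<in>wcomps (k - 1) (n - J). g (J + 1) a)" for J
  have "(\<Sum>t=1..n+1. \<Sum>a\<in>wcomps k (n + 1 - t). g (last a + t) (butlast a))
      = (\<Sum>t=Suc 0..Suc n. \<Sum>j=0..Suc n - t. \<Sum>a\<in>wcomps (k - 1) (Suc n - t - j). g (j + t) a)"
  proof (rule sum.cong)
    show "(\<Sum>a\<in>wcomps k (n + 1 - t). g (last a + t) (butlast a))
        = (\<Sum>j=0..Suc n - t. \<Sum>a\<in>wcomps (k - 1) (Suc n - t - j). g (j + t) a)" for t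
      using sum_wcomps_last[OF assms, where f = "\<lambda>j a. g (j + t) a"] by simp
  qed simp
  also have "\<dots> = (\<Sum>t=0..n. \<Sum>j=0..n - t. \<Psi> (j + t))"
    by (simp only: sum.shift_bounds_cl_Suc_ivl) (simp add: \<Psi>_def diff_diff_add add.commute)
  also have "\<dots> = (\<Sum>J=0..n. real (Suc J) * \<Psi> J)"
    by (rule sum_triangle_eq_weighted_sum)
  also have "\<dots> = (\<Sum>a\<in>wcomps k n. real (last a + 1) * g (last a + 1) (butlast a))"
    using sum_wcomps_last[OF assms, where f = "\<lambda>j a. real (j + 1) * g (j + 1) a"]
    by (simp add: \<Psi>_def sum_distrib_left)
  finally show ?thesis .
qed

theorem proposition2p5:
  fixes k n :: nat
  assumes "k \<ge> 1" and "n \<ge> 1"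
  shows "mzv_star ((k + 1) # replicate n 1)
           = (\<Sum>t = 1..n + 1. \<Sum>a \<in> wcomps k (n + 1 - t).
                 mzv ((last a + t + 1) # map (\<lambda>x. x + 1) (butlast a)))
       \<and> (\<Sum>t = 1..n + 1. \<Sum>a \<in> wcomps k (n + 1 - t).
                 mzv ((last a + t + 1) # map (\<lambda>x. x + 1) (butlast a)))
           = (\<Sum>a \<in> wcomps k n. real (last a + 1) * mzv ((last a + 2) # map (\<lambda>x. x + 1) (butlast a)))"
proof -
  have "k + 1 = (k - 1) + 2"
    using assms(1) by simp
  then have "mzv_star ((k + 1) # replicate n 1)
      = (\<Sum>j=0..n. \<Sum>a\<in>wcomps (k - 1) (n - j). real (Suc j) * mzv ((j + 2) # map Suc a))"
    by (simp only: mzv_star_eq_sum_mzv)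
  also have "\<dots> = (\<Sum>a \<in> wcomps k n.
                     real (last a + 1) * mzv ((last a + 2) # map (\<lambda>x. x + 1) (butlast a)))"
    using sum_wcomps_last[OF assms(1), where f = "\<lambda>j a. real (j + 1) * mzv ((j + 2) # map Suc a)"]
    by simp
  moreover have "(\<Sum>t = 1..n + 1. \<Sum>a \<in> wcomps k (n + 1 - t).
                   mzv ((last a + t + 1) # map (\<lambda>x. x + 1) (butlast a)))
      = (\<Sum>a \<in> wcomps k n. real (last a + 1) * mzv ((last a + 2) # map (\<lambda>x. x + 1) (butlast a)))"
    using sum_shifted_wcomps_eq_weighted_sum[OF assms(1),
            where g = "\<lambda>s a. mzv ((s + 1) # map (\<lambda>x. x + 1) a)" and n = n]
    by simp
  ultimately show ?thesis
    by simp
qed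

end
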